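(* Let $(G_n)$ be a tight sequence of finite connected graphs with bounded average degree (i.e. $\sup_n 2|E(G_n)|/|V(G_n)|<\infty$) such that $\lim_n |V(G_n)|^{-1}\log\tau(G_n)=h$. Let $G'_n$ be connected subgraphs of $G_n$ such that $$\lim_{n\to\infty}|V(G_n)|^{-1}\bigl|\{x\in V(G'_n):\deg_{G'_n}(x)=\deg_{G_n}(x)\}\bigr|=1.$$ Then $\lim_n |V(G'_n)|^{-1}\log\tau(G'_n)=h$.
   Context: $\tau(G)$ is the number of spanning trees of $G$. For $R>0$ and a finite graph $G$, $\nu_R(G)$ is the distribution of the number of edges in the ball of radius $R$ about a uniformly random vertex of $G$. A collection of finite graphs is tight if for each $R$ the collection of corresponding distributions $\nu_R(G)$ is tight. *)

theory Defs
  imports "HOL-Probability.Probability"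
begin

definition graph :: "'a set \<Rightarrow> 'a set set \<Rightarrow> bool" where
  "graph V E \<longleftrightarrow> finite V \<and> (\<forall>e\<in>E. \<exists>x y. e = {x, y} \<and> x \<noteq> y \<and> x \<in> V \<and> y \<in> V)"

definition adj :: "'a set set \<Rightarrow> ('a \<times> 'a) set" where
  "adj E = {(x, y). {x, y} \<in> E}"

definition connected_graph :: "'a set \<Rightarrow> 'a set set \<Rightarrow> bool" where
  "connected_graph V E \<longleftrightarrow> graph V E \<and> V \<noteq> {} \<and> (\<forall>x\<in>V. \<forall>y\<in>V. (x, y) \<in> (adj E)\<^sup>*)"

definition has_cycle :: "'a set \<Rightarrow> 'a set set \<Rightarrow> bool" where
  "has_cycle V E \<longleftrightarrow> (\<exists>vs. length vs \<ge> 3 \<and> distinct vs \<and> set vs \<subseteq> V \<and>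
      (\<forall>i < length vs. {vs ! i, vs ! ((i + 1) mod length vs)} \<in> E))"

definition is_spanning_tree :: "'a set \<Rightarrow> 'a set set \<Rightarrow> 'a set set \<Rightarrow> bool" where
  "is_spanning_tree V E T \<longleftrightarrow> T \<subseteq> E \<and> connected_graph V T \<and> \<not> has_cycle V T"

definition tau :: "'a set \<Rightarrow> 'a set set \<Rightarrow> nat" where
  "tau V E = card {T. is_spanning_tree V E T}"

definition degree :: "'a set set \<Rightarrow> 'a \<Rightarrow> nat" where
  "degree E x = card {e \<in> E. x \<in> e}"

definition subgraph :: "'a set \<Rightarrow> 'a set set \<Rightarrow> 'a set \<Rightarrow> 'a set set \<Rightarrow> bool" where
  "subgraph V' E' V E \<longleftrightarrow> graph V' E' \<and> V' \<subseteq> V \<and> E' \<subseteq> E"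

definition gball :: "'a set \<Rightarrow> 'a set set \<Rightarrow> 'a \<Rightarrow> nat \<Rightarrow> 'a set" where
  "gball V E x R = {y \<in> V. \<exists>k \<le> R. (x, y) \<in> (adj E) ^^ k}"

definition ball_edges :: "'a set \<Rightarrow> 'a set set \<Rightarrow> 'a \<Rightarrow> nat \<Rightarrow> nat" where
  "ball_edges V E x R = card {e \<in> E. e \<subseteq> gball V E x R}"

definition nu :: "nat \<Rightarrow> 'a set \<Rightarrow> 'a set set \<Rightarrow> real measure" where
  "nu R V E = distr (measure_pmf (pmf_of_set V)) borel (\<lambda>x. real (ball_edges V E x R))"

definition tight_graphs :: "(nat \<Rightarrow> 'a set) \<Rightarrow> (nat \<Rightarrow> 'a set set) \<Rightarrow> bool" where
  "tight_graphs V E \<longleftrightarrow> (\<forall>R. tight (\<lambda>n. nu R (V n) (E n)))"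

end

(*
  Let b be the number of vertices of G that do not have full degree in the subgraph G'.
  The edges of a spanning tree T of G that are missing from G' form a forest on these
  b vertices, so there are at most b of them; completing the rest of T to a spanning tree
  T' of G' changes at most 2b edges, since T' has no more edges than T. Conversely, every
  spanning tree of G' extends to one of G by adding |V(G)| - |V(G')| <= b edges. Hence
  log tau(G') and log tau(G) differ by at most the logarithm of the number of sets of at
  most 2b edges of G. For 0 < t <= 1 that number is at most t^(-2b) (1 + t)^|E(G)|, and
  with t = 2b / |V(G)| its logarithm is o(|V(G_n)|), because b_n = o(|V(G_n)|) and
  |E(G_n)| = O(|V(G_n)|). As also |V(G'_n)| / |V(G_n)| -> 1, the normalised entropies of
  G'_n converge to h.
*)

theory Submission
  imports Defs "HOL-Library.Transitive_Closure_Table"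
begin

section \<open>Paths and cycles\<close>

lemma adj_sym: "(x, y) \<in> adj F \<Longrightarrow> (y, x) \<in> adj F"
  by (auto simp: adj_def insert_commute)

lemma rtrancl_adj_sym: "(x, y) \<in> (adj F)\<^sup>* \<Longrightarrow> (y, x) \<in> (adj F)\<^sup>*"
  using sym_rtrancl[of "adj F"] by (auto simp: sym_def adj_sym)

lemma adj_mono: "F \<subseteq> G \<Longrightarrow> adj F \<subseteq> adj G"
  by (auto simp: adj_def)

lemma rtrancl_adj_mono: "F \<subseteq> G \<Longrightarrow> (x, y) \<in> (adj F)\<^sup>* \<Longrightarrow> (x, y) \<in> (adj G)\<^sup>*"
  using rtrancl_mono[OF adj_mono] by blast

lemma rtrancl_adj_insert_iff:
  "(x, y) \<in> (adj (insert {a, b} F))\<^sup>* \<longleftrightarrow> (x, y) \<in> (adj F)\<^sup>* \<or>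
     (((x, a) \<in> (adj F)\<^sup>* \<or> (x, b) \<in> (adj F)\<^sup>*) \<and> ((a, y) \<in> (adj F)\<^sup>* \<or> (b, y) \<in> (adj F)\<^sup>*))"
    (is "?path \<longleftrightarrow> ?split")
proof
  have adj_insert: "adj (insert {a, b} F) = adj F \<union> {(a, b), (b, a)}"
    by (auto simp: adj_def doubleton_eq_iff)
  show "?path \<Longrightarrow> ?split"
  proof (induction rule: rtrancl_induct)
    case (step y z)
    then show ?case
      unfolding adj_insert by (auto intro: rtrancl_into_rtrancl)
  qed simp
next
  define C where "C = (adj (insert {a, b} F))\<^sup>*"
  have from_F: "(u, v) \<in> C" if "(u, v) \<in> (adj F)\<^sup>*" for u v
    using that rtrancl_adj_mono[of F "insert {a, b} F"] unfolding C_def by blast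
  have "(a, b) \<in> C" "(b, a) \<in> C"
    unfolding C_def by (auto simp: adj_def insert_commute)
  moreover have trans: "(u, w) \<in> C" if "(u, v) \<in> C" "(v, w) \<in> C" for u v w
    using that unfolding C_def by (rule rtrancl_trans)
  ultimately show "?split \<Longrightarrow> ?path"
    unfolding C_def[symmetric] by (elim disjE conjE) (meson from_F trans)+
qed

lemma has_cycle_mono: "has_cycle U F \<Longrightarrow> U \<subseteq> W \<Longrightarrow> F \<subseteq> G \<Longrightarrow> has_cycle W G"
  unfolding has_cycle_def by blast

lemma has_cycle_graph:
  assumes "has_cycle U F" and "graph W F"
  shows "has_cycle W F"
proof -
  obtain vs where vs: "length vs \<ge> 3" "distinct vs"
    and edge: "\<forall>i < length vs. {vs ! i, vs ! ((i + 1) mod length vs)} \<in> F"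
    using assms(1) unfolding has_cycle_def by blast
  have "vs ! i \<in> W" if "i < length vs" for i
    using edge that assms(2) by (force simp: graph_def doubleton_eq_iff)
  then have "set vs \<subseteq> W" by (auto simp: in_set_conv_nth)
  with vs edge show ?thesis unfolding has_cycle_def by blast
qed

lemma has_cycle_imp_non_bridge:
  assumes "has_cycle W F"
  obtains a b where "{a, b} \<in> F" "a \<noteq> b" "(a, b) \<in> (adj (F - {{a, b}}))\<^sup>*"
proof -
  obtain vs where len: "length vs \<ge> 3" and dist: "distinct vs"
    and edge: "\<And>i. i < length vs \<Longrightarrow> {vs ! i, vs ! ((i + 1) mod length vs)} \<in> F"
    using assms unfolding has_cycle_def by blast
  define L where "L = length vs"
  define a where "a = vs ! 0"
  define b where "b = vs ! (L - 1)"
  define H where "H = F - {{b, a}}"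
  have L: "L \<ge> 3" using len by (simp add: L_def)
  have nth_inj: "vs ! i = vs ! j \<longleftrightarrow> i = j" if "i < L" "j < L" for i j
    using dist that by (simp add: L_def nth_eq_iff_index_eq)
  have "L - 1 < L" "Suc (L - 1) = L" using L by auto
  then have closing: "{b, a} \<in> F"
    using edge[of "L - 1"] by (simp add: L_def a_def b_def)
  have "(a, vs ! j) \<in> (adj H)\<^sup>*" if "j < L" for j
    using that
  proof (induction j)
    case (Suc j)
    have "{vs ! j, vs ! Suc j} \<in> F"
      using edge[of j] Suc.prems by (simp add: L_def)
    moreover have "vs ! Suc j \<noteq> a"
      using nth_inj[of "Suc j" 0] Suc.prems L by (simp add: a_def)
    moreover have "vs ! j \<noteq> a \<or> vs ! Suc j \<noteq> b"
      using nth_inj[of j 0] nth_inj[of "Suc j" "L - 1"] Suc.prems L by (auto simp: a_def b_def)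
    ultimately have "{vs ! j, vs ! Suc j} \<in> H"
      by (auto simp: H_def doubleton_eq_iff)
    then have "(vs ! j, vs ! Suc j) \<in> adj H" by (simp add: adj_def)
    with Suc show ?case by (simp add: rtrancl_into_rtrancl)
  qed (simp add: a_def)
  then have "(b, a) \<in> (adj H)\<^sup>*"
    using L by (simp add: b_def rtrancl_adj_sym)
  moreover have "b \<noteq> a" using L nth_inj[of "L - 1" 0] by (simp add: a_def b_def)
  ultimately show thesis
    unfolding H_def using that[OF closing] by simp
qed

lemma non_bridge_imp_has_cycle:
  assumes "graph W F" and ab: "{a, b} \<in> F" "a \<noteq> b"
    and path: "(a, b) \<in> (adj (F - {{a, b}}))\<^sup>*"
  shows "has_cycle W F"
proof -
  define R where "R x y \<longleftrightarrow> (x, y) \<in> adj (F - {{a, b}})" for x y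
  have "R\<^sup>*\<^sup>* a b"
    using path by (simp add: R_def rtranclp_rtrancl_eq)
  then obtain xs0 where "rtrancl_path R a xs0 b"
    by (auto simp: rtranclp_eq_rtrancl_path)
  then obtain xs where p: "rtrancl_path R a xs b" and dist: "distinct (a # xs)"
    by (rule rtrancl_path_distinct)
  have "xs \<noteq> []" using p ab by (cases rule: rtrancl_path.cases) auto
  then have last: "last xs = b" using rtrancl_path_last[OF p] by simp
  have "length xs \<ge> 2"
  proof (rule ccontr)
    assume "\<not> length xs \<ge> 2"
    with \<open>xs \<noteq> []\<close> have "length xs = 1" by (cases xs) (auto simp: Suc_le_eq)
    with last have "xs = [b]" by (auto simp: length_Suc_conv)
    with p have "R a b" by (auto elim: rtrancl_path.cases)
    then show False by (simp add: R_def adj_def)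
  qed
  define vs where "vs = a # xs"
  have "{vs ! i, vs ! ((i + 1) mod length vs)} \<in> F" if i: "i < length vs" for i
  proof (cases "i < length xs")
    case True
    then have "R (vs ! i) (vs ! (i + 1))"
      using rtrancl_path_nth[OF p] by (simp add: vs_def)
    with True show ?thesis by (simp add: R_def adj_def vs_def)
  next
    case False
    with i have "i = length xs" by (simp add: vs_def)
    with last \<open>xs \<noteq> []\<close> ab show ?thesis
      by (simp add: vs_def last_conv_nth insert_commute)
  qed
  moreover have "length vs \<ge> 3" "distinct vs"
    using \<open>length xs \<ge> 2\<close> dist by (auto simp: vs_def)
  ultimately have "has_cycle UNIV F"
    unfolding has_cycle_def by blast
  then show ?thesis using assms(1) by (rule has_cycle_graph)
qed

section \<open>Forests and spanning trees\<close>

lemma graph_subset: "graph W F \<Longrightarrow> G \<subseteq> F \<Longrightarrow> graph W G"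
  unfolding graph_def by blast

lemma graph_finite_edges:
  assumes "graph W F"
  shows "finite F"
proof -
  have "F \<subseteq> Pow W" "finite W" using assms unfolding graph_def by auto
  then show ?thesis by (meson finite_Pow_iff finite_subset)
qed

lemma add_edge_acyclic:
  assumes g: "graph W F" and acyclic: "\<not> has_cycle W F" and ab: "a \<in> W" "b \<in> W" "a \<noteq> b"
    and disconnected: "(a, b) \<notin> (adj F)\<^sup>*"
  shows "\<not> has_cycle W (insert {a, b} F)"
proof
  assume "has_cycle W (insert {a, b} F)"
  then obtain c d where cd: "{c, d} \<in> insert {a, b} F" "c \<noteq> d"
    and path: "(c, d) \<in> (adj (insert {a, b} F - {{c, d}}))\<^sup>*"
    by (rule has_cycle_imp_non_bridge)
  show False
  proof (cases "{c, d} = {a, b}")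
    case True
    then have "(c, d) \<in> (adj F)\<^sup>*"
      using path rtrancl_adj_mono[of "insert {a, b} F - {{c, d}}" F] by blast
    with True disconnected show False
      by (auto simp: doubleton_eq_iff dest: rtrancl_adj_sym)
  next
    case False
    define H where "H = F - {{c, d}}"
    have "{c, d} \<in> F" using cd False by auto
    then have "(c, d) \<notin> (adj H)\<^sup>*"
      using acyclic non_bridge_imp_has_cycle[OF g _ cd(2)] unfolding H_def by blast
    moreover have "(c, d) \<in> (adj (insert {a, b} H))\<^sup>*"
      using path False unfolding H_def by (simp add: insert_Diff_if)
    moreover have "(c, d) \<in> (adj F)\<^sup>*"
      using \<open>{c, d} \<in> F\<close> by (auto simp: adj_def)
    moreover have "(x, y) \<in> (adj F)\<^sup>*" if "(x, y) \<in> (adj H)\<^sup>*" for x y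
      using that rtrancl_adj_mono[of H F] unfolding H_def by blast
    ultimately show False
      using disconnected unfolding rtrancl_adj_insert_iff
      by (meson rtrancl_adj_sym rtrancl_trans)
  qed
qed

definition component :: "'a set \<Rightarrow> 'a set set \<Rightarrow> 'a \<Rightarrow> 'a set" where
  "component W F x = {y \<in> W. (x, y) \<in> (adj F)\<^sup>*}"

definition components :: "'a set \<Rightarrow> 'a set set \<Rightarrow> 'a set set" where
  "components W F = component W F ` W"

lemma in_own_component: "x \<in> W \<Longrightarrow> x \<in> component W F x"
  by (simp add: component_def)

lemma component_eq: "y \<in> component W F x \<Longrightarrow> component W F y = component W F x"
  unfolding component_def by (auto intro: rtrancl_trans dest: rtrancl_adj_sym)

lemma component_insert_edge:
  assumes "x \<in> W"
  shows "component W (insert {a, b} F) x =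
    (if x \<in> component W F a \<union> component W F b then component W F a \<union> component W F b
     else component W F x)"
proof (cases "x \<in> component W F a \<union> component W F b")
  case True
  then have "(x, a) \<in> (adj F)\<^sup>* \<or> (x, b) \<in> (adj F)\<^sup>*"
    by (auto simp: component_def dest: rtrancl_adj_sym)
  then have "(x, y) \<in> (adj (insert {a, b} F))\<^sup>* \<longleftrightarrow>
      (a, y) \<in> (adj F)\<^sup>* \<or> (b, y) \<in> (adj F)\<^sup>*" for y
    unfolding rtrancl_adj_insert_iff by (meson rtrancl_trans rtrancl_adj_sym)
  with True show ?thesis by (auto simp: component_def)
next
  case False
  then have "(x, a) \<notin> (adj F)\<^sup>*" "(x, b) \<notin> (adj F)\<^sup>*"
    using assms by (auto simp: component_def dest: rtrancl_adj_sym)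
  with False assms show ?thesis by (simp add: component_def rtrancl_adj_insert_iff)
qed

lemma components_insert_edge:
  fixes a b :: 'a and W :: "'a set" and F :: "'a set set"
  assumes "a \<in> W"
  defines "Ca \<equiv> component W F a" and "Cb \<equiv> component W F b"
  shows "components W (insert {a, b} F) = insert (Ca \<union> Cb) (components W F - {Ca, Cb})"
proof -
  let ?merge = "\<lambda>x. if x \<in> Ca \<union> Cb then Ca \<union> Cb else component W F x"
  have old: "component W F x \<in> {Ca, Cb} \<longleftrightarrow> x \<in> Ca \<union> Cb" if "x \<in> W" for x
    using that in_own_component[of x W F] component_eq[of x W F] unfolding Ca_def Cb_def by blast
  have "components W (insert {a, b} F) = ?merge ` W"
    unfolding components_def Ca_def Cb_def by (rule image_cong[OF refl component_insert_edge])
  also have "\<dots> = insert (Ca \<union> Cb) (components W F - {Ca, Cb})"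
  proof (intro equalityI subsetI)
    fix C assume "C \<in> ?merge ` W"
    then obtain x where "x \<in> W" "C = ?merge x" by blast
    then show "C \<in> insert (Ca \<union> Cb) (components W F - {Ca, Cb})"
      using old[of x] by (auto simp: components_def)
  next
    fix C assume C: "C \<in> insert (Ca \<union> Cb) (components W F - {Ca, Cb})"
    show "C \<in> ?merge ` W"
    proof (cases "C = Ca \<union> Cb")
      case True
      then show ?thesis
        using assms(1) in_own_component[OF assms(1)] by (intro rev_image_eqI[of a]) (auto simp: Ca_def)
    next
      case False
      with C obtain x where "x \<in> W" "C = component W F x" "C \<notin> {Ca, Cb}"
        by (auto simp: components_def)
      then show ?thesis
        using old[of x] by (intro rev_image_eqI[of x]) auto
    qed
  qed
  finally show ?thesis .
qed

lemma card_components_insert_edge: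
  assumes W: "finite W" and ab: "a \<in> W" "b \<in> W" and disconnected: "(a, b) \<notin> (adj F)\<^sup>*"
  shows "card (components W (insert {a, b} F)) + 1 = card (components W F)"
proof -
  define Ca where "Ca = component W F a"
  define Cb where "Cb = component W F b"
  have "Ca \<union> Cb \<notin> components W F - {Ca, Cb}"
  proof
    assume "Ca \<union> Cb \<in> components W F - {Ca, Cb}"
    then obtain x where "x \<in> W" "Ca \<union> Cb = component W F x" "Ca \<union> Cb \<notin> {Ca, Cb}"
      by (auto simp: components_def)
    moreover have "a \<in> Ca \<union> Cb" using in_own_component[OF ab(1)] by (simp add: Ca_def)
    ultimately show False
      using component_eq[of a W F x] by (simp add: Ca_def)
  qed
  moreover have "Ca \<noteq> Cb"
    using disconnected in_own_component[OF ab(2)] by (auto simp: Ca_def Cb_def component_def)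
  moreover have "{Ca, Cb} \<subseteq> components W F"
    using ab by (simp add: Ca_def Cb_def components_def)
  moreover have "finite (components W F)" using W by (simp add: components_def)
  ultimately show ?thesis
    using card_mono[of "components W F" "{Ca, Cb}"]
    by (simp add: components_insert_edge[OF ab(1)] Ca_def Cb_def card_Diff_subset)
qed

lemma card_forest:
  assumes "graph W F" and "\<not> has_cycle W F"
  shows "card W = card F + card (components W F)"
  using graph_finite_edges[OF assms(1)] assms
proof (induction F rule: finite_induct)
  case empty
  have "components W {} = (\<lambda>x. {x}) ` W"
    unfolding components_def component_def adj_def by (auto simp: image_def)
  then show ?case by (simp add: card_image)
next
  case (insert e F)
  obtain a b where e: "e = {a, b}" "a \<noteq> b" "a \<in> W" "b \<in> W"
    using insert.prems(1) unfolding graph_def by blast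
  have "graph W F" using insert.prems(1) by (rule graph_subset) blast
  moreover have "\<not> has_cycle W F"
    using insert.prems(2) has_cycle_mono[of W F W "insert e F"] by blast
  moreover have "(a, b) \<notin> (adj F)\<^sup>*"
  proof
    assume "(a, b) \<in> (adj F)\<^sup>*"
    then have "has_cycle W (insert e F)"
      using non_bridge_imp_has_cycle[OF insert.prems(1)[unfolded e], of a b] e insert.hyps
      by (simp add: insert_Diff_if)
    with insert.prems(2) show False by blast
  qed
  ultimately show ?case
    using insert card_components_insert_edge[of W a b F] e
    by (simp add: graph_def)
qed

lemma forest_card_le: "graph W F \<Longrightarrow> \<not> has_cycle W F \<Longrightarrow> card F \<le> card W"
  using card_forest by fastforce

lemma card_spanning_tree:
  assumes "is_spanning_tree V E T"
  shows "card V = card T + 1"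
proof -
  have conn: "connected_graph V T" and "\<not> has_cycle V T"
    using assms unfolding is_spanning_tree_def by auto
  moreover have "components V T = {V}"
    using conn unfolding components_def component_def connected_graph_def by auto
  ultimately show ?thesis
    using card_forest[of V T] unfolding connected_graph_def by simp
qed

lemma rtrancl_exits_set:
  assumes "(x, y) \<in> R\<^sup>*" "x \<in> S" "y \<notin> S"
  obtains u v where "(u, v) \<in> R" "u \<in> S" "v \<notin> S"
  using assms by (induction rule: rtrancl_induct) auto

text \<open>A maximal acyclic extension of F inside E is spanning: an edge of E leaving the
  component of some vertex could be added without creating a cycle.\<close>
lemma extend_to_spanning_tree:
  assumes conn: "connected_graph V E" and "F \<subseteq> E" and "\<not> has_cycle V F"
  obtains T where "is_spanning_tree V E T" "F \<subseteq> T"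
proof -
  have gE: "graph V E" using conn unfolding connected_graph_def by simp
  define M where "M = {T. F \<subseteq> T \<and> T \<subseteq> E \<and> \<not> has_cycle V T}"
  have "finite M"
    unfolding M_def using graph_finite_edges[OF gE] by (simp add: finite_subset[of _ "Pow E"] subset_iff)
  moreover have "F \<in> M" unfolding M_def using assms by simp
  ultimately obtain T where T: "T \<in> M" and maximal: "\<And>T'. T' \<in> M \<Longrightarrow> T \<subseteq> T' \<Longrightarrow> T' = T"
    using finite_has_maximal[of M] by blast
  have TE: "T \<subseteq> E" and acyclic: "\<not> has_cycle V T" using T unfolding M_def by auto
  have gT: "graph V T" using gE TE by (rule graph_subset)
  have "(x, y) \<in> (adj T)\<^sup>*" if "x \<in> V" "y \<in> V" for x y
  proof (rule ccontr)
    assume "(x, y) \<notin> (adj T)\<^sup>*"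
    moreover have "(x, y) \<in> (adj E)\<^sup>*" using conn that unfolding connected_graph_def by blast
    ultimately obtain u v where uv: "(u, v) \<in> adj E" "(x, u) \<in> (adj T)\<^sup>*" "(x, v) \<notin> (adj T)\<^sup>*"
      using rtrancl_exits_set[of x y "adj E" "{z. (x, z) \<in> (adj T)\<^sup>*}"] by auto
    then have "(u, v) \<notin> (adj T)\<^sup>*" by (meson rtrancl_trans)
    moreover have "{u, v} \<in> E" using uv(1) by (simp add: adj_def)
    moreover from this have "u \<in> V" "v \<in> V"
      using gE unfolding graph_def by (auto simp: doubleton_eq_iff)
    ultimately have "insert {u, v} T \<in> M"
      using T add_edge_acyclic[OF gT acyclic] unfolding M_def by auto
    with maximal have "{u, v} \<in> T" by blast
    with \<open>(u, v) \<notin> (adj T)\<^sup>*\<close> show False by (auto simp: adj_def)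
  qed
  then have "is_spanning_tree V E T"
    using conn TE gT acyclic unfolding is_spanning_tree_def connected_graph_def by blast
  with T show thesis using that unfolding M_def by blast
qed

lemma finite_spanning_trees: "graph V E \<Longrightarrow> finite {T. is_spanning_tree V E T}"
  using graph_finite_edges by (auto simp: is_spanning_tree_def intro: finite_subset[of _ "Pow E"])

lemma tau_pos:
  assumes "connected_graph V E"
  shows "0 < tau V E"
proof -
  have "\<not> has_cycle V {}" unfolding has_cycle_def by force
  then obtain T where "is_spanning_tree V E T" using extend_to_spanning_tree[OF assms] by blast
  moreover have "finite {T. is_spanning_tree V E T}"
    using assms by (simp add: connected_graph_def finite_spanning_trees)
  ultimately show ?thesis unfolding tau_def by (auto simp: card_gt_0_iff)
qed

section \<open>Comparing numbers of spanning trees\<close>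

definition full_degree_vertices :: "'a set \<Rightarrow> 'a set set \<Rightarrow> 'a set set \<Rightarrow> 'a set" where
  "full_degree_vertices V' E' E = {x \<in> V'. degree E' x = degree E x}"

definition small_subsets :: "'a set \<Rightarrow> nat \<Rightarrow> 'a set set" where
  "small_subsets A k = {S. S \<subseteq> A \<and> card S \<le> k}"

lemma finite_small_subsets: "finite A \<Longrightarrow> finite (small_subsets A k)"
  unfolding small_subsets_def by (auto intro: finite_subset[of _ "Pow A"])

lemma small_subsets_mono: "k \<le> l \<Longrightarrow> small_subsets A k \<subseteq> small_subsets A l"
  unfolding small_subsets_def by auto

lemma card_small_subsets_pos: "finite A \<Longrightarrow> 0 < card (small_subsets A k)"
  using finite_small_subsets[of A k] by (auto simp: card_gt_0_iff small_subsets_def)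

lemma card_le_mult_if_subset_image:
  assumes "finite B" "finite C" "A \<subseteq> f ` (B \<times> C)"
  shows "card A \<le> card B * card C"
proof -
  have "card A \<le> card (f ` (B \<times> C))"
    using assms by (intro card_mono) auto
  also have "\<dots> \<le> card (B \<times> C)"
    using assms by (intro card_image_le) auto
  finally show ?thesis by (simp add: card_cartesian_product)
qed

lemma edge_at_full_degree_vertex:
  assumes "finite E" "E' \<subseteq> E" "degree E' x = degree E x" "e \<in> E" "x \<in> e"
  shows "e \<in> E'"
proof -
  have "{e \<in> E'. x \<in> e} = {e \<in> E. x \<in> e}"
    using assms(1-3) by (intro card_subset_eq) (auto simp: degree_def)
  with assms(4,5) show ?thesis by blast
qed

lemma card_edges_outside_subgraph_le:
  assumes gE: "graph V E" and E': "E' \<subseteq> E" and T: "T \<subseteq> E" "\<not> has_cycle V T"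
  shows "card (T - E') \<le> card (V - full_degree_vertices V' E' E)"
proof (rule forest_card_le)
  show "graph (V - full_degree_vertices V' E' E) (T - E')"
    unfolding graph_def
  proof (intro conjI ballI)
    fix e assume e: "e \<in> T - E'"
    then obtain x y where xy: "e = {x, y}" "x \<noteq> y" "x \<in> V" "y \<in> V"
      using gE T(1) unfolding graph_def by blast
    have "z \<notin> full_degree_vertices V' E' E" if "z \<in> e" for z
      using edge_at_full_degree_vertex[OF graph_finite_edges[OF gE] E' _ _ that] e T(1)
      by (auto simp: full_degree_vertices_def)
    with xy show "\<exists>x y. e = {x, y} \<and> x \<noteq> y \<and> x \<in> V - full_degree_vertices V' E' E \<and>
        y \<in> V - full_degree_vertices V' E' E" by blast
  qed (use gE in \<open>simp add: graph_def\<close>)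
  show "\<not> has_cycle (V - full_degree_vertices V' E' E) (T - E')"
    using T(2) has_cycle_mono[of _ "T - E'" V T] by blast
qed

lemma spanning_tree_near_subgraph_tree:
  assumes conn': "connected_graph V' E'" and sub: "subgraph V' E' V E" and gE: "graph V E"
    and T: "is_spanning_tree V E T"
  obtains T' S where "is_spanning_tree V' E' T'"
    and "S \<in> small_subsets E (2 * card (V - full_degree_vertices V' E' E))" and "sym_diff T' S = T"
proof -
  have VV': "V' \<subseteq> V" and EE': "E' \<subseteq> E" using sub by (auto simp: subgraph_def)
  have TE: "T \<subseteq> E" and acyclic: "\<not> has_cycle V T" and finT: "finite T"
    using T graph_finite_edges by (auto simp: is_spanning_tree_def connected_graph_def)
  have "\<not> has_cycle V' (T \<inter> E')"
    using acyclic VV' has_cycle_mono[of V' "T \<inter> E'" V T] by blast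
  then obtain T' where T': "is_spanning_tree V' E' T'" and kept: "T \<inter> E' \<subseteq> T'"
    using extend_to_spanning_tree[OF conn'] by (metis inf_le2)
  then have T'E': "T' \<subseteq> E'" and finT': "finite T'"
    using graph_finite_edges by (auto simp: is_spanning_tree_def connected_graph_def)
  have "card V' \<le> card V" using gE VV' by (simp add: card_mono graph_def)
  then have "card T' \<le> card T"
    using card_spanning_tree[OF T] card_spanning_tree[OF T'] by simp
  moreover have "T' \<inter> T = T \<inter> E'" using kept T'E' by blast
  ultimately have "card (T' - T) \<le> card (T - E')"
    using finT finT' by (simp add: card_Diff_subset_Int)
  moreover have "card (T - E') \<le> card (V - full_degree_vertices V' E' E)"
    using card_edges_outside_subgraph_le[OF gE EE' TE acyclic] .
  ultimately have "card ((T - E') \<union> (T' - T)) \<le> 2 * card (V - full_degree_vertices V' E' E)"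
    using card_Un_le[of "T - E'" "T' - T"] by linarith
  moreover have "(T - E') \<union> (T' - T) \<subseteq> E" using TE T'E' EE' by blast
  moreover have "sym_diff T' ((T - E') \<union> (T' - T)) = T" using kept T'E' by blast
  ultimately show thesis
    using that[OF T'] unfolding small_subsets_def by blast
qed

lemma subgraph_tree_near_spanning_tree:
  assumes conn: "connected_graph V E" and sub: "subgraph V' E' V E"
    and T': "is_spanning_tree V' E' T'"
  obtains T S where "is_spanning_tree V E T"
    and "S \<in> small_subsets E (card (V - full_degree_vertices V' E' E))" and "sym_diff T S = T'"
proof -
  have gE: "graph V E" using conn by (simp add: connected_graph_def)
  have VV': "V' \<subseteq> V" and EE': "E' \<subseteq> E" using sub by (auto simp: subgraph_def)
  have "T' \<subseteq> E" "graph V' T'" "\<not> has_cycle V' T'"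
    using T' EE' by (auto simp: is_spanning_tree_def connected_graph_def)
  then have "\<not> has_cycle V T'" using has_cycle_graph by blast
  then obtain T where T: "is_spanning_tree V E T" and "T' \<subseteq> T"
    using extend_to_spanning_tree[OF conn \<open>T' \<subseteq> E\<close>] by blast
  have "finite V'" "full_degree_vertices V' E' E \<subseteq> V'"
    using gE VV' by (auto simp: graph_def full_degree_vertices_def intro: finite_subset)
  then have "card V - card V' \<le> card V - card (full_degree_vertices V' E' E)"
    by (simp add: card_mono diff_le_mono2)
  also have "\<dots> = card (V - full_degree_vertices V' E' E)"
    using gE VV' \<open>full_degree_vertices V' E' E \<subseteq> V'\<close>
    by (intro card_Diff_subset[symmetric]) (auto simp: graph_def intro: finite_subset)
  finally have "card (T - T') \<le> card (V - full_degree_vertices V' E' E)"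
    using graph_finite_edges[OF \<open>graph V' T'\<close>] \<open>T' \<subseteq> T\<close>
      card_spanning_tree[OF T] card_spanning_tree[OF T'] by (simp add: card_Diff_subset)
  moreover have "T - T' \<subseteq> E" using T by (auto simp: is_spanning_tree_def)
  moreover have "sym_diff T (T - T') = T'" using \<open>T' \<subseteq> T\<close> by blast
  ultimately show thesis
    using that[OF T] by (simp add: small_subsets_def)
qed

lemma tau_le_tau_subgraph_mult:
  assumes conn: "connected_graph V E" and conn': "connected_graph V' E'"
    and sub: "subgraph V' E' V E"
  shows "tau V E \<le> tau V' E' * card (small_subsets E (2 * card (V - full_degree_vertices V' E' E)))"
proof -
  let ?S = "small_subsets E (2 * card (V - full_degree_vertices V' E' E))"
  have gE: "graph V E" using conn by (simp add: connected_graph_def)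
  have "{T. is_spanning_tree V E T} \<subseteq>
      (\<lambda>(T', S). sym_diff T' S) ` ({T'. is_spanning_tree V' E' T'} \<times> ?S)"
  proof
    fix T assume "T \<in> {T. is_spanning_tree V E T}"
    then obtain T' S where "is_spanning_tree V' E' T'" "S \<in> ?S" "sym_diff T' S = T"
      using spanning_tree_near_subgraph_tree[OF conn' sub gE] by blast
    then show "T \<in> (\<lambda>(T', S). sym_diff T' S) ` ({T'. is_spanning_tree V' E' T'} \<times> ?S)"
      by (intro rev_image_eqI[of "(T', S)"]) auto
  qed
  then show ?thesis
    unfolding tau_def using conn' gE
    by (intro card_le_mult_if_subset_image finite_spanning_trees finite_small_subsets graph_finite_edges)
      (auto simp: connected_graph_def)
qed

lemma tau_subgraph_le_tau_mult:
  assumes conn: "connected_graph V E" and sub: "subgraph V' E' V E"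
  shows "tau V' E' \<le> tau V E * card (small_subsets E (card (V - full_degree_vertices V' E' E)))"
proof -
  let ?S = "small_subsets E (card (V - full_degree_vertices V' E' E))"
  have gE: "graph V E" using conn by (simp add: connected_graph_def)
  have "{T'. is_spanning_tree V' E' T'} \<subseteq>
      (\<lambda>(T, S). sym_diff T S) ` ({T. is_spanning_tree V E T} \<times> ?S)"
  proof
    fix T' assume "T' \<in> {T'. is_spanning_tree V' E' T'}"
    then obtain T S where "is_spanning_tree V E T" "S \<in> ?S" "sym_diff T S = T'"
      using subgraph_tree_near_spanning_tree[OF conn sub] by blast
    then show "T' \<in> (\<lambda>(T, S). sym_diff T S) ` ({T. is_spanning_tree V E T} \<times> ?S)"
      by (intro rev_image_eqI[of "(T, S)"]) auto
  qed
  then show ?thesis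
    unfolding tau_def using gE
    by (intro card_le_mult_if_subset_image finite_spanning_trees finite_small_subsets graph_finite_edges)
qed

lemma ln_tau_subgraph_diff_le:
  assumes conn: "connected_graph V E" and conn': "connected_graph V' E'"
    and sub: "subgraph V' E' V E"
  shows "\<bar>ln (tau V' E') - ln (tau V E)\<bar> \<le>
    ln (card (small_subsets E (2 * card (V - full_degree_vertices V' E' E))))"
proof -
  define b where "b = card (V - full_degree_vertices V' E' E)"
  define K where "K = card (small_subsets E (2 * b))"
  have ln_le: "ln (real x) \<le> ln (real y) + ln (real K)" if "x \<le> y * K" "0 < x" "0 < y" "0 < K"
    for x y
  proof -
    have "ln (real x) \<le> ln (real y * real K)"
      using that by (simp flip: of_nat_mult)
    then show ?thesis using that by (simp add: ln_mult)
  qed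
  have finE: "finite E" using conn graph_finite_edges by (auto simp: connected_graph_def)
  have "card (small_subsets E b) \<le> K"
    unfolding K_def by (intro card_mono finite_small_subsets finE small_subsets_mono) simp
  then have "tau V' E' \<le> tau V E * K"
    using tau_subgraph_le_tau_mult[OF conn sub] unfolding b_def[symmetric]
    by (meson le_trans mult_le_mono2)
  moreover have "tau V E \<le> tau V' E' * K"
    using tau_le_tau_subgraph_mult[OF assms] unfolding b_def[symmetric] K_def .
  moreover have "0 < tau V E" "0 < tau V' E'" "0 < K"
    using tau_pos[OF conn] tau_pos[OF conn'] card_small_subsets_pos[OF finE] by (simp_all add: K_def)
  ultimately have "ln (tau V' E') \<le> ln (tau V E) + ln K" "ln (tau V E) \<le> ln (tau V' E') + ln K"
    using ln_le by auto
  then show ?thesis unfolding K_def b_def by linarith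
qed

section \<open>Counting small edge sets\<close>

lemma card_small_subsets:
  assumes "finite A"
  shows "card (small_subsets A k) = (\<Sum>j\<le>k. card A choose j)"
proof -
  have "small_subsets A k = (\<Union>j\<le>k. {S. S \<subseteq> A \<and> card S = j})"
    by (auto simp: small_subsets_def)
  also have "card \<dots> = (\<Sum>j\<le>k. card {S. S \<subseteq> A \<and> card S = j})"
    using assms by (intro card_UN_disjoint) (auto intro: finite_subset[of _ "Pow A"])
  finally show ?thesis using n_subsets[OF assms] by simp
qed

lemma card_small_subsets_mult_power_le:
  fixes t :: real
  assumes "finite A" and t: "0 < t" "t \<le> 1"
  shows "card (small_subsets A k) * t ^ k \<le> exp (t * card A)"
proof -
  define m where "m = card A"
  have "card (small_subsets A k) * t ^ k = (\<Sum>j\<le>k. (m choose j) * t ^ k)"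
    unfolding card_small_subsets[OF assms(1)] m_def by (simp add: sum_distrib_right)
  also have "\<dots> \<le> (\<Sum>j\<le>k. (m choose j) * t ^ j)"
    using t by (intro sum_mono mult_left_mono power_decreasing) auto
  also have "\<dots> \<le> (\<Sum>j\<le>m. (m choose j) * t ^ j)"
  proof (cases "k \<le> m")
    case True
    then show ?thesis using t by (intro sum_mono2) auto
  next
    case False
    then have "(\<Sum>j\<le>k. (m choose j) * t ^ j) = (\<Sum>j\<le>m. (m choose j) * t ^ j)"
      by (intro sum.mono_neutral_right) auto
    then show ?thesis by simp
  qed
  also have "\<dots> = (t + 1) ^ m" by (simp add: binomial_ring)
  also have "\<dots> \<le> exp t ^ m"
    using t exp_ge_add_one_self[of t] by (intro power_mono) (auto simp: add.commute)
  also have "\<dots> = exp (t * m)" by (simp add: exp_of_nat_mult[symmetric] mult.commute)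
  finally show ?thesis unfolding m_def .
qed

lemma mult_ln_inverse_le_two_sqrt:
  fixes t :: real
  assumes "0 < t" "t \<le> 1"
  shows "t * ln (1 / t) \<le> 2 * sqrt t"
proof -
  have "ln (1 / t) = 2 * ln (1 / sqrt t)"
    using assms by (simp add: ln_div ln_sqrt)
  also have "\<dots> \<le> 2 / sqrt t"
    using ln_le_minus_one[of "1 / sqrt t"] assms by simp
  finally have "t * ln (1 / t) \<le> t * (2 / sqrt t)"
    using assms by (intro mult_left_mono) auto
  also have "\<dots> = 2 * sqrt t"
    using assms by (simp add: field_simps real_div_sqrt)
  finally show ?thesis .
qed

lemma ln_card_small_subsets_le:
  fixes C n :: real
  assumes A: "finite A" "card A \<le> C * n" and n: "0 < n" and k: "k \<le> n"
  shows "ln (card (small_subsets A k)) \<le> n * (2 * sqrt (k / n) + C * (k / n))"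
proof (cases "k = 0")
  case True
  have "small_subsets A k = {{}}"
    using True A(1) by (auto simp: small_subsets_def dest: finite_subset)
  with True show ?thesis by simp
next
  case False
  define t where "t = k / n"
  have t: "0 < t" "t \<le> 1" using False n k by (auto simp: t_def)
  define K where "K = real (card (small_subsets A k))"
  have "0 < K" using card_small_subsets_pos[OF A(1)] by (simp add: K_def)
  have "ln K + k * ln t = ln (K * t ^ k)"
    using \<open>0 < K\<close> t by (simp add: ln_mult ln_realpow)
  also have "\<dots> \<le> ln (exp (t * card A))"
    using card_small_subsets_mult_power_le[OF A(1) t, of k] \<open>0 < K\<close> t
    by (subst ln_le_cancel_iff) (auto simp: K_def)
  also have "\<dots> = t * card A" by simp
  finally have "ln K + k * ln t \<le> t * card A" .
  moreover have "ln (1 / t) = - ln t" "real k = n * t"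
    using n t by (simp_all add: ln_div t_def)
  ultimately have "ln K \<le> n * (t * ln (1 / t)) + t * card A"
    by (simp add: algebra_simps)
  also have "\<dots> \<le> n * (2 * sqrt t) + t * (C * n)"
    using mult_ln_inverse_le_two_sqrt[OF t] n t A(2) by (intro add_mono mult_left_mono) auto
  finally show ?thesis unfolding K_def t_def by (simp add: algebra_simps)
qed

lemma ln_card_small_subsets_sublinear:
  fixes n :: "nat \<Rightarrow> real"
  assumes A: "\<And>i. finite (A i)" "\<And>i. card (A i) \<le> C * n i" and n: "\<And>i. 0 < n i"
    and k: "(\<lambda>i. k i / n i) \<longlonglongrightarrow> 0"
  shows "(\<lambda>i. ln (card (small_subsets (A i) (k i))) / n i) \<longlonglongrightarrow> 0"
proof (rule tendsto_sandwich)
  show "\<forall>\<^sub>F i in sequentially. 0 \<le> ln (card (small_subsets (A i) (k i))) / n i"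
  proof (intro always_eventually allI)
    fix i
    have "1 \<le> real (card (small_subsets (A i) (k i)))"
      using card_small_subsets_pos[OF A(1)] by (simp add: Suc_le_eq)
    then show "0 \<le> ln (card (small_subsets (A i) (k i))) / n i"
      using n[of i] by simp
  qed
  have "(\<lambda>i. 2 * sqrt (k i / n i) + C * (k i / n i)) \<longlonglongrightarrow> 2 * sqrt 0 + C * 0"
    by (intro tendsto_intros k)
  then show "(\<lambda>i. 2 * sqrt (k i / n i) + C * (k i / n i)) \<longlonglongrightarrow> 0" by simp
  have "\<forall>\<^sub>F i in sequentially. k i / n i < 1"
    using order_tendstoD(2)[OF k] by simp
  then show "\<forall>\<^sub>F i in sequentially.
      ln (card (small_subsets (A i) (k i))) / n i \<le> 2 * sqrt (k i / n i) + C * (k i / n i)"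
  proof eventually_elim
    case (elim i)
    then have "k i \<le> n i" using n[of i] by (simp add: field_simps)
    with ln_card_small_subsets_le[OF A n]
    have "ln (card (small_subsets (A i) (k i))) \<le> n i * (2 * sqrt (k i / n i) + C * (k i / n i))" .
    then show ?case using n[of i] pos_divide_le_eq mult.commute by metis
  qed
qed simp

section \<open>Passing to the limit\<close>

lemma tendsto_ratio_transfer:
  fixes a b n N :: "nat \<Rightarrow> real"
  assumes "(\<lambda>i. a i / n i) \<longlonglongrightarrow> h" "(\<lambda>i. (b i - a i) / n i) \<longlonglongrightarrow> 0"
    and "(\<lambda>i. N i / n i) \<longlonglongrightarrow> 1" and "\<And>i. n i \<noteq> 0"
  shows "(\<lambda>i. b i / N i) \<longlonglongrightarrow> h"
proof -
  have "(\<lambda>i. (a i / n i + (b i - a i) / n i) / (N i / n i)) \<longlonglongrightarrow> (h + 0) / 1"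
    using assms by (intro tendsto_intros) auto
  moreover have "(a i / n i + (b i - a i) / n i) / (N i / n i) = b i / N i" for i
    using assms(4)[of i] by (simp add: field_simps)
  ultimately show ?thesis by (simp only: add_0_right div_by_1)
qed

lemma full_degree_fraction_limits:
  assumes sub: "\<And>i. subgraph (V' i) (E' i) (V i) (E i)" and V: "\<And>i. finite (V i)" "\<And>i. V i \<noteq> {}"
    and full: "(\<lambda>i. card (full_degree_vertices (V' i) (E' i) (E i)) / card (V i)) \<longlonglongrightarrow> 1"
  shows "(\<lambda>i. card (V i - full_degree_vertices (V' i) (E' i) (E i)) / card (V i)) \<longlonglongrightarrow> 0"
    and "(\<lambda>i. card (V' i) / card (V i)) \<longlonglongrightarrow> 1"
proof -
  define G where "G i = full_degree_vertices (V' i) (E' i) (E i)" for i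
  have GV': "G i \<subseteq> V' i" and V'V: "V' i \<subseteq> V i" for i
    using sub[of i] by (auto simp: G_def full_degree_vertices_def subgraph_def)
  have card_le: "card (G i) \<le> card (V' i)" "card (V' i) \<le> card (V i)" for i
    using GV' V'V V by (meson card_mono finite_subset)+
  have pos: "0 < card (V i)" for i using V[of i] by (simp add: card_gt_0_iff)
  have "card (V i - G i) = card (V i) - card (G i)" for i
    using GV' V'V V by (meson card_Diff_subset finite_subset subset_trans)
  then have "card (V i - G i) / card (V i) = 1 - card (G i) / card (V i)" for i
    using pos[of i] card_le[of i] by (simp add: diff_divide_distrib)
  then show "(\<lambda>i. card (V i - G i) / card (V i)) \<longlonglongrightarrow> 0"
    using tendsto_diff[OF tendsto_const[of 1] full] by (simp add: G_def)
  have "card (G i) / card (V i) \<le> card (V' i) / card (V i)" "card (V' i) / card (V i) \<le> (1 :: real)"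
    for i using card_le[of i] pos[of i] by (simp_all add: divide_right_mono)
  then show "(\<lambda>i. card (V' i) / card (V i)) \<longlonglongrightarrow> 1"
    by (intro tendsto_sandwich[OF _ _ full[folded G_def] tendsto_const] always_eventually allI)
qed

theorem corollary3p13:
  fixes V V' :: "nat \<Rightarrow> 'a set" and E E' :: "nat \<Rightarrow> 'a set set" and h :: real
  assumes conn: "\<And>n. connected_graph (V n) (E n)"
    and tight: "tight_graphs V E"
    and bdeg: "bdd_above (range (\<lambda>n. 2 * real (card (E n)) / real (card (V n))))"
    and ent: "(\<lambda>n. ln (real (tau (V n) (E n))) / real (card (V n))) \<longlonglongrightarrow> h"
    and sub: "\<And>n. subgraph (V' n) (E' n) (V n) (E n)"
    and conn': "\<And>n. connected_graph (V' n) (E' n)"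
    and full: "(\<lambda>n. real (card {x \<in> V' n. degree (E' n) x = degree (E n) x}) / real (card (V n)))
                 \<longlonglongrightarrow> 1"
  shows "(\<lambda>n. ln (real (tau (V' n) (E' n))) / real (card (V' n))) \<longlonglongrightarrow> h"
proof (rule tendsto_ratio_transfer[OF ent])
  define bad where "bad n = card (V n - full_degree_vertices (V' n) (E' n) (E n))" for n
  have V: "finite (V n)" "V n \<noteq> {}" and finE: "finite (E n)" for n
    using conn[of n] graph_finite_edges by (auto simp: connected_graph_def graph_def)
  then have pos: "0 < real (card (V n))" for n by (simp add: card_gt_0_iff)
  note limits = full_degree_fraction_limits[OF sub V, unfolded full_degree_vertices_def, OF full]
  show "(\<lambda>n. real (card (V' n)) / real (card (V n))) \<longlonglongrightarrow> 1" by (rule limits(2))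
  obtain D where D: "2 * real (card (E n)) / real (card (V n)) \<le> D" for n
    using bdeg by (auto simp: bdd_above_def)
  have dens: "card (E n) \<le> D / 2 * card (V n)" for n
    using D[of n] pos[of n] by (simp add: field_simps)
  have "(\<lambda>n. real (2 * bad n) / card (V n)) \<longlonglongrightarrow> 0"
    using tendsto_mult_left[OF limits(1), of 2] by (simp add: bad_def full_degree_vertices_def)
  then have sublinear: "(\<lambda>n. ln (card (small_subsets (E n) (2 * bad n))) / card (V n)) \<longlonglongrightarrow> 0"
    by (rule ln_card_small_subsets_sublinear[OF finE dens pos])
  have bound: "norm ((ln (tau (V' n) (E' n)) - ln (tau (V n) (E n))) / card (V n)) \<le>
      ln (card (small_subsets (E n) (2 * bad n))) / card (V n)" for n
    using ln_tau_subgraph_diff_le[OF conn conn' sub, of n] pos[of n]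
    by (simp add: bad_def divide_right_mono)
  show "(\<lambda>n. (ln (tau (V' n) (E' n)) - ln (tau (V n) (E n))) / card (V n)) \<longlonglongrightarrow> 0"
    by (rule Lim_null_comparison[OF always_eventually[OF allI[OF bound]] sublinear])
  show "real (card (V n)) \<noteq> 0" for n using pos[of n] by simp
qed

end
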